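(* Let $R_0(z)=\sum_{n\ge 0} r_n z^n$, where $r_n$ is the number of $R$-colorings of size $n$ of lambda skeletons of degree $0$. Then, as formal power series, $$R_0(z) = -\frac{1}{54z}\left(1-18z-(1-12z)^{3/2}\right).$$
   Context: Lambda skeletons: graded sets $\mathrm{SLam}(i)$, $i\in\mathbb{N}$, least such that $\_ \in \mathrm{SLam}(1)$; $p\in\mathrm{SLam}(j), q\in\mathrm{SLam}(k)\Rightarrow p(q)\in\mathrm{SLam}(j+k)$; $p\in\mathrm{SLam}(i+1)\Rightarrow \lambda\_.p\in\mathrm{SLam}(i)$; the index $i$ is the degree. Define graded sets $\mathrm{SNeu}(i)$ and $\mathrm{SNF}(i)$ of skeletons by the rules (v) $\_\in\mathrm{SNeu}(1)$; (a) $p\in\mathrm{SNeu}(j)$, $q\in\mathrm{SNF}(k)$ $\Rightarrow$ $p(q)\in\mathrm{SNeu}(j+k)$; (s) $p\in\mathrm{SNeu}(i)\Rightarrow p\in\mathrm{SNF}(i)$; ($\ell$) $p\in\mathrm{SNF}(i+1)\Rightarrow \lambda\_.p\in\mathrm{SNF}(i)$. An $R$-coloring of a skeleton $p\in\mathrm{SLam}(i)$ is a derivation of $p\in\mathrm{SNF}(i)$ using these rules; its size is the number of uses of rule (s) in it. Here $(1-12z)^{3/2}$ denotes the binomial power series $\sum_{m\ge0}\binom{3/2}{m}(-12z)^m$. *)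

theory Defs
  imports "HOL-Computational_Algebra.Formal_Power_Series"
begin

text \<open>Lambda skeletons: \<open>Hole\<close> is the placeholder \<open>_\<close>, \<open>App p q\<close> is \<open>p(q)\<close>,
  \<open>Lam p\<close> is \<open>\<lambda>_.p\<close>.\<close>
datatype skel = Hole | App skel skel | Lam skel

inductive slam :: "skel \<Rightarrow> nat \<Rightarrow> bool" where
  slam_hole: "slam Hole 1"
| slam_app: "slam p j \<Longrightarrow> slam q k \<Longrightarrow> slam (App p q) (j + k)"
| slam_lam: "slam p (Suc i) \<Longrightarrow> slam (Lam p) i"

datatype deriv = RV | RA deriv deriv | RS deriv | RL deriv

inductive der_neu :: "deriv \<Rightarrow> skel \<Rightarrow> nat \<Rightarrow> bool"
  and der_nf :: "deriv \<Rightarrow> skel \<Rightarrow> nat \<Rightarrow> bool" where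
  rule_v: "der_neu RV Hole 1"
| rule_a: "der_neu d1 p j \<Longrightarrow> der_nf d2 q k \<Longrightarrow> der_neu (RA d1 d2) (App p q) (j + k)"
| rule_s: "der_neu d p i \<Longrightarrow> der_nf (RS d) p i"
| rule_l: "der_nf d p (Suc i) \<Longrightarrow> der_nf (RL d) (Lam p) i"

fun dsize :: "deriv \<Rightarrow> nat" where
  "dsize RV = 0"
| "dsize (RA d1 d2) = dsize d1 + dsize d2"
| "dsize (RS d) = Suc (dsize d)"
| "dsize (RL d) = dsize d"

text \<open>Number of R-colorings of size n of lambda skeletons of degree 0:
  pairs (skeleton p \<in> SLam(0), derivation of p \<in> SNF(0)) of size n.\<close>
definition r_count :: "nat \<Rightarrow> nat" where
  "r_count n = card {(p, d). slam p 0 \<and> der_nf d p 0 \<and> dsize d = n}"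

definition binom_3_2 :: "real fps" where
  "binom_3_2 = Abs_fps (\<lambda>m. ((3/2::real) gchoose m) * (-12) ^ m)"

end

theory Submission
  imports Defs "HOL-Computational_Algebra.Polynomial"
begin

unbundle fps_syntax

text \<open>Let \<open>N(z,u)\<close> and \<open>F(z,u)\<close> count derivations of \<open>p \<in> SNeu(i)\<close> and \<open>p \<in> SNF(i)\<close>
  by size (\<open>z\<close>) and degree (\<open>u\<close>). Rules (v) and (a) give \<open>N = u + N F\<close>; rules (s) and (\<open>\<ell>\<close>)
  give \<open>u F = u z N + F - R\<^sub>0(z)\<close>, since (\<open>\<ell>\<close>) lowers the degree by one and \<open>R\<^sub>0(z) = F(z,0)\<close>.
  Eliminating \<open>F\<close> leaves a quadratic equation for \<open>N\<close> whose discriminant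
  \<open>\<Delta> = (u - 1 + R\<^sub>0)\<^sup>2 - 4 z u\<^sup>2 (u - 1)\<close> is the square of \<open>K = 2 z u N - (u - 1 + R\<^sub>0)\<close>.
  By the quadratic method, the power series \<open>U(z)\<close> with \<open>K(z, U(z)) = 0\<close> is a double
  root of \<open>\<Delta>\<close>, and the two equations \<open>\<Delta>(z,U) = \<partial>\<^sub>u\<Delta>(z,U) = 0\<close> determine \<open>U\<close> and \<open>R\<^sub>0\<close>; they
  are solved through a rational parametrisation of the curve they cut out.\<close>

section \<open>Fixed points of contractions on power series\<close>

lemma fps_cutoff_mult_cong:
  fixes f g f' g' :: "'a::semiring_0 fps"
  assumes "fps_cutoff n f = fps_cutoff n f'" "fps_cutoff n g = fps_cutoff n g'"
  shows "fps_cutoff n (f * g) = fps_cutoff n (f' * g')"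
  using assms unfolding fps_cutoff_eq_fps_cutoff_iff fps_mult_nth
  by (auto intro!: sum.cong)

lemma fps_cutoff_Suc_fps_X_mult_cong:
  fixes f g :: "'a::semiring_1 fps"
  assumes "fps_cutoff n f = fps_cutoff n g"
  shows "fps_cutoff (Suc n) (fps_X * f) = fps_cutoff (Suc n) (fps_X * g)"
  using assms unfolding fps_cutoff_eq_fps_cutoff_iff by (auto simp: less_Suc_eq_0_disj)

lemma fps_contraction_has_fixpoint:
  fixes \<Phi> :: "'a::zero fps \<Rightarrow> 'a fps"
  assumes contr: "\<And>n f g. fps_cutoff n f = fps_cutoff n g \<Longrightarrow>
                     fps_cutoff (Suc n) (\<Phi> f) = fps_cutoff (Suc n) (\<Phi> g)"
  obtains f where "\<Phi> f = f"
proof -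
  define s where "s k = (\<Phi> ^^ k) 0" for k
  have s_Suc: "s (Suc k) = \<Phi> (s k)" for k
    by (simp add: s_def)
  have consecutive: "fps_cutoff k (s k) = fps_cutoff k (s (Suc k))" for k
  proof (induction k)
    case (Suc k)
    then show ?case
      using contr[OF Suc.IH] by (simp only: s_Suc)
  qed simp
  have stable: "fps_cutoff k (s k) = fps_cutoff k (s k')" if "k \<le> k'" for k k'
    using that
  proof (induction k' rule: dec_induct)
    case (step k')
    then show ?case
      using consecutive[of k'] by (auto simp: fps_cutoff_eq_fps_cutoff_iff)
  qed simp
  define f where "f = Abs_fps (\<lambda>j. s (Suc j) $ j)"
  have f_cutoff: "fps_cutoff k f = fps_cutoff k (s k)" for k
    using stable by (auto simp: fps_cutoff_eq_fps_cutoff_iff f_def)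
  have "\<Phi> f $ j = f $ j" for j
    using contr[OF f_cutoff, of j]
    by (simp add: fps_cutoff_eq_fps_cutoff_iff s_Suc f_def)
  then have "\<Phi> f = f"
    by (simp add: fps_eq_iff)
  then show ?thesis
    by (rule that)
qed

section \<open>Substitution into bivariate power series\<close>

definition poly_fps :: "'a::comm_ring_1 poly \<Rightarrow> 'a fps \<Rightarrow> 'a fps" where
  "poly_fps p f = poly (map_poly fps_const p) f"

lemma fps_const_sum: "fps_const (sum g A) = (\<Sum>i\<in>A. fps_const (g i))"
  by (induction A rule: infinite_finite_induct) (simp_all flip: fps_const_add)

lemma poly_fps_add [simp]: "poly_fps (p + q) f = poly_fps p f + poly_fps q f"
proof -
  have "map_poly fps_const (p + q) = map_poly fps_const p + map_poly fps_const q"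
    by (intro poly_eqI) (simp add: coeff_map_poly)
  then show ?thesis by (simp add: poly_fps_def)
qed

lemma poly_fps_diff [simp]: "poly_fps (p - q) f = poly_fps p f - poly_fps q f"
proof -
  have "map_poly fps_const (p - q) = map_poly fps_const p - map_poly fps_const q"
    by (intro poly_eqI) (simp add: coeff_map_poly)
  then show ?thesis by (simp add: poly_fps_def)
qed

lemma poly_fps_mult [simp]: "poly_fps (p * q) f = poly_fps p f * poly_fps q f"
proof -
  have "map_poly fps_const (p * q) = map_poly fps_const p * map_poly fps_const q"
    by (intro poly_eqI) (simp add: coeff_map_poly coeff_mult fps_const_sum)
  then show ?thesis by (simp add: poly_fps_def)
qed

lemma poly_fps_pCons: "poly_fps (pCons a p) f = fps_const a + f * poly_fps p f"
  by (simp add: poly_fps_def map_poly_pCons)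

lemma poly_fps_0 [simp]: "poly_fps 0 f = 0"
  by (simp add: poly_fps_def)

lemma poly_fps_const [simp]: "poly_fps [:c:] f = fps_const c"
  by (simp add: poly_fps_pCons)

lemma poly_fps_1 [simp]: "poly_fps 1 f = 1"
  by (simp add: poly_fps_def)

lemma poly_fps_identity [simp]: "poly_fps [:0, 1:] f = f"
  by (simp add: poly_fps_pCons)

lemma poly_fps_sum [simp]: "poly_fps (sum g A) f = (\<Sum>i\<in>A. poly_fps (g i) f)"
  by (induction A rule: infinite_finite_induct) simp_all

lemma fps_cutoff_poly_fps_cong:
  "fps_cutoff n f = fps_cutoff n g \<Longrightarrow> fps_cutoff n (poly_fps p f) = fps_cutoff n (poly_fps p g)"
proof (induction p)
  case (pCons a p)
  then show ?case
    using fps_cutoff_mult_cong[OF _ pCons.IH] by (simp add: poly_fps_pCons fps_cutoff_add)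
qed simp

text \<open>Series in \<open>z\<close> whose coefficients are polynomials in the catalytic variable \<open>u\<close> are
  modelled as \<open>'a poly fps\<close>, with \<open>z = fps_X\<close> and \<open>u = fps_u\<close>. \<open>subst_u H f\<close> is \<open>H(z, f(z))\<close>;
  the \<open>n\<close>-th term is divisible by \<open>z\<^sup>n\<close>, so coefficient \<open>m\<close> only needs the terms \<open>n \<le> m\<close>.\<close>

definition fps_u :: "'a::comm_ring_1 poly fps" where
  "fps_u = fps_const [:0, 1:]"

definition const_u :: "'a::comm_ring_1 fps \<Rightarrow> 'a poly fps" where
  "const_u g = Abs_fps (\<lambda>n. [:g $ n:])"

definition subst_u :: "'a::comm_ring_1 poly fps \<Rightarrow> 'a fps \<Rightarrow> 'a fps" where
  "subst_u H f = Abs_fps (\<lambda>m. \<Sum>n\<le>m. (fps_X ^ n * poly_fps (H $ n) f) $ m)"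

lemma subst_u_nth_truncation:
  assumes "m \<le> M"
  shows "subst_u H f $ m = (\<Sum>n\<le>M. fps_X ^ n * poly_fps (H $ n) f) $ m"
proof -
  have "(\<Sum>n\<le>M. fps_X ^ n * poly_fps (H $ n) f) $ m = (\<Sum>n\<le>M. (fps_X ^ n * poly_fps (H $ n) f) $ m)"
    by (simp add: fps_sum_nth)
  also have "\<dots> = (\<Sum>n\<le>m. (fps_X ^ n * poly_fps (H $ n) f) $ m)"
    using assms by (intro sum.mono_neutral_right) (auto simp: fps_X_power_mult_nth)
  finally show ?thesis
    by (simp add: subst_u_def)
qed

lemma subst_u_add [simp]: "subst_u (H + K) f = subst_u H f + subst_u K f"
  by (simp add: subst_u_def fps_eq_iff distrib_left sum.distrib)

lemma subst_u_diff [simp]: "subst_u (H - K) f = subst_u H f - subst_u K f"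
  by (simp add: subst_u_def fps_eq_iff right_diff_distrib sum_subtractf)

lemma subst_u_mult [simp]: "subst_u (H * K) f = subst_u H f * subst_u K f"
proof -
  have "subst_u (H * K) f $ m = (subst_u H f * subst_u K f) $ m" for m
  proof -
    define T where "T L = (\<Sum>n\<le>m. fps_X ^ n * poly_fps (L $ n) f)" for L
    define c where "c i j = (fps_X ^ (i + j) * (poly_fps (H $ i) f * poly_fps (K $ j) f)) $ m" for i j
    have "(subst_u H f * subst_u K f) $ m = (T H * T K) $ m"
      using fps_cutoff_mult_cong[of "Suc m" "subst_u H f" "T H" "subst_u K f" "T K"]
      by (simp add: fps_cutoff_eq_fps_cutoff_iff subst_u_nth_truncation T_def)
    also have "\<dots> = (\<Sum>i\<le>m. \<Sum>j\<le>m. c i j)"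
      by (simp add: T_def c_def sum_product power_add mult_ac fps_sum_nth)
    also have "\<dots> = (\<Sum>(i, j)\<in>{(i, j). i + j \<le> m}. c i j)"
      by (simp add: sum.cartesian_product, intro sum.mono_neutral_right)
         (auto simp: c_def fps_X_power_mult_nth split: if_splits)
    also have "\<dots> = (\<Sum>k\<le>m. \<Sum>i\<le>k. c i (k - i))"
      by (rule sum.triangle_reindex_eq)
    also have "\<dots> = T (H * K) $ m"
      by (simp add: T_def c_def fps_sum_nth fps_mult_nth sum_distrib_left atLeast0AtMost)
    also have "\<dots> = subst_u (H * K) f $ m"
      unfolding T_def by (rule subst_u_nth_truncation[symmetric]) simp
    finally show ?thesis
      by simp
  qed
  then show ?thesis
    by (simp add: fps_eq_iff)
qed

lemma subst_u_fps_const [simp]: "subst_u (fps_const p) f = poly_fps p f"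
proof -
  have "subst_u (fps_const p) f $ m = poly_fps p f $ m" for m
  proof -
    have "(\<Sum>n\<le>m. (fps_X ^ n * poly_fps (fps_const p $ n) f) $ m)
        = (\<Sum>n\<in>{0}. (fps_X ^ n * poly_fps (fps_const p $ n) f) $ m)"
      by (intro sum.mono_neutral_right) auto
    then show ?thesis
      by (simp add: subst_u_def)
  qed
  then show ?thesis
    by (simp add: fps_eq_iff)
qed

lemma subst_u_0 [simp]: "subst_u 0 f = 0"
  using subst_u_fps_const[of 0 f] by simp

lemma subst_u_1 [simp]: "subst_u 1 f = 1"
  using subst_u_fps_const[of 1 f] by simp

lemma subst_u_of_nat [simp]: "subst_u (of_nat n) f = of_nat n"
  by (induction n) simp_all

lemma subst_u_numeral [simp]: "subst_u (numeral k) f = numeral k"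
  using subst_u_of_nat[of "numeral k" f] by simp

lemma subst_u_power [simp]: "subst_u (H ^ n) f = subst_u H f ^ n"
  by (induction n) simp_all

lemma subst_u_fps_X [simp]: "subst_u fps_X f = fps_X"
proof -
  have "subst_u fps_X f $ m = fps_X $ m" for m
  proof -
    have "(\<Sum>n\<le>m. (fps_X ^ n * poly_fps (fps_X $ n) f) $ m)
        = (\<Sum>n\<in>{1} \<inter> {..m}. (fps_X ^ n * poly_fps (fps_X $ n) f) $ m)"
      by (intro sum.mono_neutral_right) auto
    then show ?thesis
      by (cases m) (simp_all add: subst_u_def)
  qed
  then show ?thesis
    by (simp add: fps_eq_iff)
qed

lemma subst_u_fps_u [simp]: "subst_u fps_u f = f"
  by (simp add: fps_u_def)

lemma subst_u_const_u [simp]: "subst_u (const_u g) f = g"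
proof -
  have "subst_u (const_u g) f $ m = g $ m" for m
  proof -
    have "(\<Sum>n\<le>m. (fps_X ^ n * poly_fps (const_u g $ n) f) $ m)
        = (\<Sum>n\<in>{m}. (fps_X ^ n * poly_fps (const_u g $ n) f) $ m)"
      by (intro sum.mono_neutral_right) (auto simp: const_u_def fps_X_power_mult_nth)
    then show ?thesis
      by (simp add: subst_u_def const_u_def fps_X_power_mult_nth)
  qed
  then show ?thesis
    by (simp add: fps_eq_iff)
qed

lemma fps_cutoff_subst_u_cong:
  assumes "fps_cutoff n f = fps_cutoff n g"
  shows "fps_cutoff n (subst_u H f) = fps_cutoff n (subst_u H g)"
proof -
  have "(fps_X ^ k * poly_fps (H $ k) f) $ j = (fps_X ^ k * poly_fps (H $ k) g) $ j" if "j < n" for j k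
    using fps_cutoff_poly_fps_cong[OF assms, of "H $ k"] that
    by (auto simp: fps_X_power_mult_nth fps_cutoff_eq_fps_cutoff_iff)
  then show ?thesis
    by (simp add: fps_cutoff_eq_fps_cutoff_iff subst_u_def)
qed

lemma subst_u_equation_solvable:
  obtains f :: "'a::comm_ring_1 fps" where "f = g + fps_X * subst_u H f"
proof -
  obtain f where "g + fps_X * subst_u H f = f"
  proof (rule fps_contraction_has_fixpoint)
    fix n and f f' :: "'a fps"
    assume "fps_cutoff n f = fps_cutoff n f'"
    then have "fps_cutoff (Suc n) (fps_X * subst_u H f) = fps_cutoff (Suc n) (fps_X * subst_u H f')"
      by (intro fps_cutoff_Suc_fps_X_mult_cong fps_cutoff_subst_u_cong)
    then show "fps_cutoff (Suc n) (g + fps_X * subst_u H f) = fps_cutoff (Suc n) (g + fps_X * subst_u H f')"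
      by (simp add: fps_cutoff_add)
  qed
  then show ?thesis
    using that[of f] by simp
qed

definition deriv_u :: "'a::idom poly fps \<Rightarrow> 'a poly fps" where
  "deriv_u H = Abs_fps (\<lambda>n. pderiv (H $ n))"

lemma deriv_u_add [simp]: "deriv_u (H + K) = deriv_u H + deriv_u K"
  by (simp add: deriv_u_def fps_eq_iff pderiv_add)

lemma deriv_u_diff [simp]: "deriv_u (H - K) = deriv_u H - deriv_u K"
  by (simp add: deriv_u_def fps_eq_iff pderiv_diff)

lemma deriv_u_mult [simp]: "deriv_u (H * K) = deriv_u H * K + H * deriv_u K"
proof -
  have "deriv_u (H * K) $ n = (deriv_u H * K + H * deriv_u K) $ n" for n
  proof -
    have "deriv_u (H * K) $ n = (\<Sum>i=0..n. pderiv (H $ i * K $ (n - i)))"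
      using higher_pderiv_sum[of 1] by (simp add: deriv_u_def fps_mult_nth)
    also have "\<dots> = (\<Sum>i=0..n. pderiv (H $ i) * K $ (n - i)) + (\<Sum>i=0..n. H $ i * pderiv (K $ (n - i)))"
      by (simp add: pderiv_mult sum.distrib mult.commute add.commute)
    also have "\<dots> = (deriv_u H * K + H * deriv_u K) $ n"
      by (simp add: deriv_u_def fps_mult_nth)
    finally show ?thesis .
  qed
  then show ?thesis
    by (simp add: fps_eq_iff)
qed

lemma deriv_u_fps_const [simp]: "deriv_u (fps_const p) = fps_const (pderiv p)"
  by (simp add: deriv_u_def fps_eq_iff)

lemma deriv_u_fps_u [simp]: "deriv_u fps_u = 1"
  by (simp add: fps_u_def pderiv_pCons)

lemma deriv_u_fps_X [simp]: "deriv_u fps_X = 0"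
  by (simp add: deriv_u_def fps_eq_iff fps_X_def)

lemma deriv_u_const_u [simp]: "deriv_u (const_u g) = 0"
  by (simp add: deriv_u_def fps_eq_iff const_u_def pderiv_pCons)

lemma deriv_u_1 [simp]: "deriv_u 1 = 0"
  using deriv_u_fps_const[of 1] by simp

lemma deriv_u_numeral [simp]: "deriv_u (numeral k) = 0"
  using deriv_u_fps_const[of "numeral k"] by (simp add: numeral_fps_const)

lemma subst_u_double_root_of_square:
  assumes "subst_u K f = 0"
  shows "subst_u (K\<^sup>2) f = 0" and "subst_u (deriv_u (K\<^sup>2)) f = 0"
  using assms by (simp_all add: power2_eq_square)

section \<open>The quadratic method\<close>

lemma kernel_discriminant:
  fixes N F u x L :: "'a::idom"
  assumes "N = u + N * F" and "u * F = u * x * N + F - L"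
  shows "(2 * x * u * N - (u - 1 + L))\<^sup>2 = (u - 1 + L)\<^sup>2 - 4 * x * u\<^sup>2 * (u - 1)"
proof -
  have "x * u * N\<^sup>2 - (u - 1 + L) * N + u * (u - 1) = 0"
    using assms by algebra
  then show ?thesis
    by algebra
qed

lemma gbinomial_series_mult:
  fixes a b c :: "'a::field_char_0"
  shows "Abs_fps (\<lambda>n. (a gchoose n) * c ^ n) * Abs_fps (\<lambda>n. (b gchoose n) * c ^ n)
       = Abs_fps (\<lambda>n. ((a + b) gchoose n) * c ^ n)"
proof -
  have "(\<Sum>i=0..n. (a gchoose i) * c ^ i * ((b gchoose (n - i)) * c ^ (n - i)))
      = (\<Sum>i=0..n. (a gchoose i) * (b gchoose (n - i))) * c ^ n" for n
    unfolding sum_distrib_right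
    by (intro sum.cong refl) (simp add: power_add [symmetric] mult_ac)
  then show ?thesis
    by (simp add: fps_eq_iff fps_mult_nth gbinomial_Vandermonde)
qed

lemma fps_binomial_power_nth:
  fixes c :: "'a::comm_ring_1"
  shows "((1 + fps_const c * fps_X) ^ k) $ n = of_nat (k choose n) * c ^ n"
proof -
  have "(1 + fps_const c * fps_X) ^ k = (\<Sum>j\<le>k. of_nat (k choose j) * (fps_const c * fps_X) ^ j * 1 ^ (k - j))"
    using binomial_ring[of "fps_const c * fps_X" 1 k] by (simp add: add.commute)
  also have "\<dots> = (\<Sum>j\<le>k. fps_const (of_nat (k choose j) * c ^ j) * fps_X ^ j)"
    by (simp add: power_mult_distrib fps_const_power mult_ac flip: fps_of_nat)
  finally have "((1 + fps_const c * fps_X) ^ k) $ n = (\<Sum>j\<le>k. if j = n then of_nat (k choose j) * c ^ j else 0)"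
    by (simp add: fps_sum_nth fps_X_power_nth if_distrib[of "\<lambda>x. _ * x"] cong: if_cong)
  then show ?thesis
    by (simp add: binomial_eq_0)
qed

lemma binom_3_2_square: "binom_3_2\<^sup>2 = (1 - 12 * fps_X)^3"
proof -
  have "binom_3_2\<^sup>2 = Abs_fps (\<lambda>n. ((3/2 + 3/2 :: real) gchoose n) * (-12) ^ n)"
    unfolding binom_3_2_def power2_eq_square by (rule gbinomial_series_mult)
  also have "\<dots> = (1 + fps_const (-12) * fps_X) ^ 3"
  proof (rule fps_ext)
    fix n
    have "(3/2 + 3/2 :: real) gchoose n = of_nat (3 choose n)"
      using binomial_gbinomial[of 3 n, where 'a = real] by simp
    then show "Abs_fps (\<lambda>n. ((3/2 + 3/2 :: real) gchoose n) * (-12) ^ n) $ n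
             = ((1 + fps_const (-12) * fps_X) ^ 3) $ n"
      by (simp only: fps_binomial_power_nth fps_nth_Abs_fps)
  qed
  also have "fps_const (-12) = (-12 :: real fps)"
    by (simp add: numeral_fps_const)
  finally show ?thesis
    by simp
qed

lemma fps_square_eq_imp_eq:
  fixes f g :: "'a::{idom, ring_char_0} fps"
  assumes "f\<^sup>2 = g\<^sup>2" and "f $ 0 = g $ 0" and "g $ 0 \<noteq> 0"
  shows "f = g"
proof -
  have "(f - g) * (f + g) = 0"
    using assms(1) by algebra
  moreover have "(f + g) $ 0 \<noteq> 0"
    using assms(2,3) by (simp flip: mult_2)
  then have "f + g \<noteq> 0"
    by (metis fps_zero_nth)
  ultimately show ?thesis
    by simp
qed

lemma double_root_solution:
  fixes U G :: "real fps"
  assumes disc: "(U - 1 + G)\<^sup>2 = 4 * fps_X * U\<^sup>2 * (U - 1)"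
    and disc_deriv: "U - 1 + G = 2 * fps_X * U * (3 * U - 2)"
    and U0: "U $ 0 = 1" and G0: "G $ 0 = 0"
  shows "54 * fps_X * G = binom_3_2 - 1 + 18 * fps_X"
proof -
  have "4 * fps_X * U\<^sup>2 * (fps_X * (3 * U - 2)\<^sup>2 - (U - 1)) = 0"
    using disc disc_deriv by algebra
  moreover have "U \<noteq> 0"
    using U0 by auto
  ultimately have curve: "fps_X * (3 * U - 2)\<^sup>2 = U - 1"
    by simp
  txt \<open>\<open>S\<close> parametrises the curve rationally: \<open>z = S - 3 S\<^sup>2\<close> and \<open>U = (1 - 2 S) / (1 - 3 S)\<close>.\<close>
  define S where "S = fps_X * (3 * U - 2)"
  have X_eq: "fps_X = S - 3 * S\<^sup>2"
    using curve unfolding S_def by algebra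
  have "(1 - 3 * S) * (54 * fps_X * G + 1 - 18 * fps_X) = (1 - 3 * S) * (1 - 6 * S) ^ 3"
    using curve disc_deriv unfolding S_def by algebra
  moreover have "(1 - 3 * S) $ 0 \<noteq> 0"
    by (simp add: S_def)
  then have "1 - 3 * S \<noteq> 0"
    by (metis fps_zero_nth)
  ultimately have cube: "54 * fps_X * G + 1 - 18 * fps_X = (1 - 6 * S) ^ 3"
    by simp
  have "(1 - 6 * S)\<^sup>2 = 1 - 12 * fps_X"
    unfolding X_eq by algebra
  then have "(54 * fps_X * G + 1 - 18 * fps_X)\<^sup>2 = binom_3_2\<^sup>2"
    unfolding cube binom_3_2_square by algebra
  then have "54 * fps_X * G + 1 - 18 * fps_X = binom_3_2"
    by (rule fps_square_eq_imp_eq) (simp_all add: binom_3_2_def G0)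
  then show ?thesis
    by (simp add: algebra_simps)
qed

lemma quadratic_method:
  fixes N F :: "real poly fps" and G :: "real fps"
  assumes N_eq: "N = fps_u + N * F"
    and F_eq: "fps_u * F = fps_u * fps_X * N + F - const_u G"
    and G0: "G $ 0 = 0"
  shows "54 * fps_X * G = binom_3_2 - 1 + 18 * fps_X"
proof -
  define K where "K = 2 * fps_X * fps_u * N - (fps_u - 1 + const_u G)"
  define \<Delta> where "\<Delta> = (fps_u - 1 + const_u G)\<^sup>2 - 4 * fps_X * fps_u\<^sup>2 * (fps_u - 1)"
  have "K\<^sup>2 = \<Delta>"
    unfolding K_def \<Delta>_def by (rule kernel_discriminant[OF N_eq F_eq])
  obtain U where U: "U = 1 - G + fps_X * subst_u (2 * fps_u * N) U"
    by (rule subst_u_equation_solvable)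
  then have "subst_u K U = 0"
    by (simp add: K_def algebra_simps)
  then have "subst_u \<Delta> U = 0" and "subst_u (deriv_u \<Delta>) U = 0"
    using subst_u_double_root_of_square \<open>K\<^sup>2 = \<Delta>\<close> by metis+
  then have disc: "(U - 1 + G)\<^sup>2 = 4 * fps_X * U\<^sup>2 * (U - 1)"
    and "2 * (U - 1 + G) - 4 * fps_X * (3 * U\<^sup>2 - 2 * U) = 0"
    by (simp_all add: \<Delta>_def power2_eq_square algebra_simps)
  then have disc_deriv: "U - 1 + G = 2 * fps_X * U * (3 * U - 2)"
    by algebra
  have "U $ 0 = 1"
    using arg_cong[OF U, of "\<lambda>f. f $ 0"] G0 by simp
  then show ?thesis
    using double_root_solution[OF disc disc_deriv _ G0] by simp
qed

section \<open>Counting derivations\<close>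

inductive_simps der_neu_RV [simp]: "der_neu RV p k"
inductive_simps der_neu_RA [simp]: "der_neu (RA a b) p k"
inductive_simps der_neu_RS [simp]: "der_neu (RS d) p k"
inductive_simps der_neu_RL [simp]: "der_neu (RL d) p k"
inductive_simps der_nf_RV [simp]: "der_nf RV p k"
inductive_simps der_nf_RA [simp]: "der_nf (RA a b) p k"
inductive_simps der_nf_RS [simp]: "der_nf (RS d) p k"
inductive_simps der_nf_RL [simp]: "der_nf (RL d) p k"

lemma der_unique:
  shows "der_neu d p k \<Longrightarrow> der_neu d p' k' \<Longrightarrow> p' = p \<and> k' = k"
    and "der_nf d p k \<Longrightarrow> der_nf d p' k' \<Longrightarrow> p' = p \<and> k' = k"
proof (induction arbitrary: p' k' and p' k' rule: der_neu_der_nf.inducts)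
  case rule_v
  then show ?case
    by simp
next
  case (rule_a d1 p j d2 q k)
  from rule_a.prems obtain p1 q1 j1 k1
    where "p' = App p1 q1" "k' = j1 + k1" "der_neu d1 p1 j1" "der_nf d2 q1 k1"
    by auto
  with rule_a.IH show ?case
    by blast
next
  case (rule_s d p i)
  then show ?case
    by simp
next
  case (rule_l d p i)
  from rule_l.prems obtain q where "p' = Lam q" "der_nf d q (Suc k')"
    by auto
  with rule_l.IH show ?case
    by blast
qed

lemma der_slam:
  shows "der_neu d p k \<Longrightarrow> slam p k"
    and "der_nf d p k \<Longrightarrow> slam p k"
  by (induction rule: der_neu_der_nf.inducts) (auto intro: slam.intros simp flip: One_nat_def)

lemma der_size_bound:
  shows "der_neu d p k \<Longrightarrow> size d + k \<le> 3 * dsize d + 1"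
    and "der_nf d p k \<Longrightarrow> size d + k < 3 * dsize d"
  by (induction rule: der_neu_der_nf.inducts) auto

lemma finite_deriv_size_le: "finite {d :: deriv. size d \<le> m}"
proof (induction m)
  case 0
  have "{d :: deriv. size d \<le> 0} \<subseteq> {RV}"
  proof
    fix d :: deriv
    assume "d \<in> {d. size d \<le> 0}"
    then show "d \<in> {RV}"
      by (cases d) auto
  qed
  then show ?case
    using finite_subset by blast
next
  case (Suc m)
  let ?S = "{d :: deriv. size d \<le> m}"
  have "{d :: deriv. size d \<le> Suc m} \<subseteq> {RV} \<union> case_prod RA ` (?S \<times> ?S) \<union> RS ` ?S \<union> RL ` ?S"
  proof
    fix d :: deriv
    assume "d \<in> {d. size d \<le> Suc m}"
    then show "d \<in> {RV} \<union> case_prod RA ` (?S \<times> ?S) \<union> RS ` ?S \<union> RL ` ?S"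
      by (cases d) auto
  qed
  then show ?case
    by (rule finite_subset) (use Suc in auto)
qed

definition neu_derivs :: "nat \<Rightarrow> nat \<Rightarrow> deriv set" where
  "neu_derivs n k = {d. (\<exists>p. der_neu d p k) \<and> dsize d = n}"

definition nf_derivs :: "nat \<Rightarrow> nat \<Rightarrow> deriv set" where
  "nf_derivs n k = {d. (\<exists>p. der_nf d p k) \<and> dsize d = n}"

lemma finite_neu_derivs: "finite (neu_derivs n k)"
  by (rule finite_subset[OF _ finite_deriv_size_le[of "3 * n + 1"]])
     (auto simp: neu_derivs_def dest: der_size_bound(1))

lemma finite_nf_derivs: "finite (nf_derivs n k)"
  by (rule finite_subset[OF _ finite_deriv_size_le[of "3 * n"]])
     (auto simp: nf_derivs_def dest!: der_size_bound(2))

lemma neu_derivs_eq_empty: "3 * n + 1 < k \<Longrightarrow> neu_derivs n k = {}"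
  by (auto simp: neu_derivs_def dest: der_size_bound(1))

lemma nf_derivs_eq_empty: "3 * n \<le> k \<Longrightarrow> nf_derivs n k = {}"
  by (auto simp: nf_derivs_def dest: der_size_bound(2))

lemma card_nf_derivs_0: "card (nf_derivs 0 k) = 0"
  by (simp add: nf_derivs_eq_empty)

lemma card_nf_derivs_Suc:
  "card (nf_derivs (Suc n) k) = card (neu_derivs n k) + card (nf_derivs (Suc n) (Suc k))"
proof -
  have split: "nf_derivs (Suc n) k = RS ` neu_derivs n k \<union> RL ` nf_derivs (Suc n) (Suc k)"
  proof (intro set_eqI iffI)
    fix d
    assume "d \<in> nf_derivs (Suc n) k"
    then show "d \<in> RS ` neu_derivs n k \<union> RL ` nf_derivs (Suc n) (Suc k)"
      by (cases d) (auto simp: nf_derivs_def neu_derivs_def)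
  qed (auto simp: nf_derivs_def neu_derivs_def)
  have "card (nf_derivs (Suc n) k) = card (RS ` neu_derivs n k) + card (RL ` nf_derivs (Suc n) (Suc k))"
    unfolding split by (rule card_Un_disjoint) (auto simp: finite_neu_derivs finite_nf_derivs)
  then show ?thesis
    by (simp add: card_image inj_on_def)
qed

lemma neu_derivs_decomp:
  "neu_derivs n k = (if n = 0 \<and> k = 1 then {RV} else {})
     \<union> (\<Union>(i, j)\<in>{..n} \<times> {..k}. case_prod RA ` (neu_derivs i j \<times> nf_derivs (n - i) (k - j)))"
  (is "_ = ?V \<union> ?A")
proof (intro set_eqI iffI)
  fix d
  assume d: "d \<in> neu_derivs n k"
  show "d \<in> ?V \<union> ?A"
  proof (cases d)
    case (RA a b)
    with d obtain p q j l where "der_neu a p j" "der_nf b q l" "k = j + l" "dsize a + dsize b = n"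
      by (auto simp: neu_derivs_def)
    then have "(dsize a, j) \<in> {..n} \<times> {..k}"
      and "d \<in> case_prod RA ` (neu_derivs (dsize a) j \<times> nf_derivs (n - dsize a) (k - j))"
      using RA by (auto simp: neu_derivs_def nf_derivs_def)
    then show ?thesis
      by blast
  qed (use d in \<open>auto simp: neu_derivs_def\<close>)
next
  fix d
  assume "d \<in> ?V \<union> ?A"
  then consider "d \<in> ?V"
    | i j a b where "i \<le> n" "j \<le> k" "d = RA a b" "a \<in> neu_derivs i j" "b \<in> nf_derivs (n - i) (k - j)"
    by auto
  then show "d \<in> neu_derivs n k"
  proof cases
    case 1
    then show ?thesis
      by (auto simp: neu_derivs_def split: if_splits)
  next
    case (2 i j a b)
    then obtain p q where "der_neu a p j" "der_nf b q (k - j)"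
      by (auto simp: neu_derivs_def nf_derivs_def)
    then have "der_neu (RA a b) (App p q) (j + (k - j))"
      by (rule rule_a)
    then show ?thesis
      using 2 by (auto simp: neu_derivs_def nf_derivs_def)
  qed
qed

lemma card_neu_derivs:
  "card (neu_derivs n k) = (if n = 0 \<and> k = 1 then 1 else 0)
     + (\<Sum>i\<le>n. \<Sum>j\<le>k. card (neu_derivs i j) * card (nf_derivs (n - i) (k - j)))"
proof -
  define I where "I = {..n} \<times> {..k}"
  define A where "A = (\<lambda>(i, j). case_prod RA ` (neu_derivs i j \<times> nf_derivs (n - i) (k - j)))"
  have finite_A: "finite (A x)" for x
    by (auto simp: A_def finite_neu_derivs finite_nf_derivs split: prod.splits)
  have RV_notin_A: "RV \<notin> A x" for x
    by (auto simp: A_def split: prod.splits)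
  have disjoint_A: "A x \<inter> A y = {}" if "x \<noteq> y" for x y
  proof -
    obtain i j i' j' where xy: "x = (i, j)" "y = (i', j')"
      by fastforce
    have "i = i' \<and> j = j'" if "a \<in> neu_derivs i j" "a \<in> neu_derivs i' j'" for a
      using that der_unique(1) by (auto simp: neu_derivs_def)
    then show ?thesis
      using \<open>x \<noteq> y\<close> by (auto simp: A_def xy)
  qed
  have "neu_derivs n k = (if n = 0 \<and> k = 1 then {RV} else {}) \<union> (\<Union>x\<in>I. A x)"
    unfolding I_def A_def by (rule neu_derivs_decomp)
  then have "card (neu_derivs n k) = card (if n = 0 \<and> k = 1 then {RV} else {}) + card (\<Union>x\<in>I. A x)"
    by (simp only:) (rule card_Un_disjoint, simp_all add: I_def finite_A RV_notin_A)
  also have "card (if n = 0 \<and> k = 1 then {RV} else {}) = (if n = 0 \<and> k = 1 then 1 else 0)"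
    by simp
  also have "card (\<Union>x\<in>I. A x) = (\<Sum>x\<in>I. card (A x))"
    by (rule card_UN_disjoint) (auto simp: I_def finite_A disjoint_A)
  also have "\<dots> = (\<Sum>(i, j)\<in>I. card (neu_derivs i j) * card (nf_derivs (n - i) (k - j)))"
    by (intro sum.cong refl) (auto simp: A_def card_image inj_on_def card_cartesian_product)
  finally show ?thesis
    by (simp add: I_def sum.cartesian_product)
qed

lemma r_count_eq_card_nf_derivs: "r_count n = card (nf_derivs n 0)"
proof -
  let ?S = "{(p, d). slam p 0 \<and> der_nf d p 0 \<and> dsize d = n}"
  have "inj_on snd ?S"
  proof (rule inj_onI)
    fix x y
    assume "x \<in> ?S" "y \<in> ?S" "snd x = snd y"
    then show "x = y"
      using der_unique(2) by (metis (mono_tags, lifting) case_prodE mem_Collect_eq prod.collapse snd_conv)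
  qed
  moreover have "snd ` ?S = nf_derivs n 0"
  proof (intro set_eqI iffI)
    fix d
    assume "d \<in> nf_derivs n 0"
    then obtain p where "der_nf d p 0" "dsize d = n"
      by (auto simp: nf_derivs_def)
    then have "(p, d) \<in> ?S"
      using der_slam(2) by blast
    then show "d \<in> snd ` ?S"
      by (rule rev_image_eqI) simp
  next
    fix d
    assume "d \<in> snd ` ?S"
    then show "d \<in> nf_derivs n 0"
      by (auto simp: nf_derivs_def)
  qed
  ultimately show ?thesis
    unfolding r_count_def using card_image by fastforce
qed

text \<open>Truncating coefficient \<open>n\<close> at degree \<open>3 n + 1\<close> loses nothing for derivations,
  by \<open>der_size_bound\<close>.\<close>
definition bivariate_gf :: "(nat \<Rightarrow> nat \<Rightarrow> nat) \<Rightarrow> real poly fps" where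
  "bivariate_gf c = Abs_fps (\<lambda>n. \<Sum>k\<le>3 * n + 1. monom (real (c n k)) k)"

lemma coeff_bivariate_gf_nth:
  assumes "\<And>k. 3 * n + 1 < k \<Longrightarrow> c n k = 0"
  shows "coeff (bivariate_gf c $ n) k = real (c n k)"
  using assms by (simp add: bivariate_gf_def coeff_sum)

definition neu_gf :: "real poly fps" where
  "neu_gf = bivariate_gf (\<lambda>n k. card (neu_derivs n k))"

definition nf_gf :: "real poly fps" where
  "nf_gf = bivariate_gf (\<lambda>n k. card (nf_derivs n k))"

lemma coeff_neu_gf_nth: "coeff (neu_gf $ n) k = real (card (neu_derivs n k))"
  unfolding neu_gf_def by (rule coeff_bivariate_gf_nth) (simp add: neu_derivs_eq_empty)

lemma coeff_nf_gf_nth: "coeff (nf_gf $ n) k = real (card (nf_derivs n k))"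
  unfolding nf_gf_def by (rule coeff_bivariate_gf_nth) (simp add: nf_derivs_eq_empty)

lemma coeff_fps_u_nth: "coeff (fps_u $ n) k = (if n = 0 \<and> k = 1 then 1 else 0)"
  by (auto simp: fps_u_def coeff_pCons split: nat.splits)

lemma neu_gf_equation: "neu_gf = fps_u + neu_gf * nf_gf"
proof -
  have "coeff (neu_gf $ n) k = coeff ((fps_u + neu_gf * nf_gf) $ n) k" for n k
  proof -
    have "coeff ((neu_gf * nf_gf) $ n) k
        = (\<Sum>i\<le>n. \<Sum>j\<le>k. real (card (neu_derivs i j) * card (nf_derivs (n - i) (k - j))))"
      by (simp add: fps_mult_nth coeff_sum coeff_mult coeff_neu_gf_nth coeff_nf_gf_nth atLeast0AtMost)
    then show ?thesis
      using arg_cong[OF card_neu_derivs[of n k], of real] by (simp add: coeff_neu_gf_nth coeff_fps_u_nth)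
  qed
  then show ?thesis
    by (simp add: fps_eq_iff poly_eq_iff)
qed

lemma nf_gf_equation:
  "fps_u * nf_gf = fps_u * fps_X * neu_gf + nf_gf - const_u (Abs_fps (\<lambda>n. real (card (nf_derivs n 0))))"
proof -
  have "coeff ((fps_u * nf_gf) $ n) k
      = coeff ((fps_u * (fps_X * neu_gf) + nf_gf - const_u (Abs_fps (\<lambda>n. real (card (nf_derivs n 0))))) $ n) k"
    for n k
  proof (cases k)
    case 0
    then show ?thesis
      by (simp add: fps_u_def const_u_def coeff_nf_gf_nth)
  next
    case (Suc k')
    then show ?thesis
      using card_nf_derivs_Suc[of _ k'] card_nf_derivs_0
      by (cases n) (auto simp: fps_u_def const_u_def coeff_nf_gf_nth coeff_neu_gf_nth)
  qed
  then show ?thesis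
    by (simp add: fps_eq_iff poly_eq_iff mult.assoc)
qed

theorem proposition2p9:
  shows "Abs_fps (\<lambda>n. real (r_count n))
           = - (1 - 18 * fps_X - binom_3_2) / (54 * fps_X)"
proof -
  have eq: "54 * fps_X * Abs_fps (\<lambda>n. real (r_count n)) = binom_3_2 - 1 + 18 * fps_X"
    using quadratic_method[OF neu_gf_equation nf_gf_equation]
    by (simp add: r_count_eq_card_nf_derivs card_nf_derivs_0)
  have "(54 * fps_X :: real fps) \<noteq> 0"
    by (metis fps_X_neq_zero mult_eq_0_iff zero_neq_numeral)
  moreover have "- (1 - 18 * fps_X - binom_3_2) = 54 * fps_X * Abs_fps (\<lambda>n. real (r_count n))"
    using eq by (simp add: algebra_simps)
  ultimately show ?thesis
    by simp
qed

end
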